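(* Let $0<\alpha<\beta<1$, let $\theta_1\in[0,1)$ and let $F_1\subset V(\theta_1)$ be a linear subspace with $\dim F_1=k$. For every $\varepsilon>0$ there exists $\delta>0$ such that for every $\theta_2\in[0,1)$ with $|\theta_2-\theta_1|\le\delta$ there exists a linear subspace $F_2\subset V(\theta_2)$ with $\dim F_2=k$ and $\max\{\mathrm{dist}(F_1,F_2),\mathrm{dist}(F_2,F_1)\}<\varepsilon$.
   Context: $Q=(0,1)$, $Q_1=(0,\alpha)\cup(\beta,1)$. Let $p$ be a $1$-periodic measurable function with $p>0$, $p,p^{-1}\in L^\infty(0,1)$. For $\theta\in[0,1)$, $H^1_\theta(Q)=\{u\in H^1(0,1):u(1)=e^{2\pi i\theta}u(0)\}$ and $V(\theta)=\{v\in H^1_\theta(Q):p v'=0\text{ a.e. on }Q_1\}$. For linear subspaces $N,M$ of $H^1(0,1)$, $\mathrm{dist}(N,M):=\sup_{u\in N,\ \|u\|_{H^1}=1}\ \inf_{v\in M}\|u-v\|_{H^1}$. *)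

theory Defs
  imports "HOL-Analysis.Analysis" "HOL-Library.Function_Algebras"
begin

text \<open>Elements of H^1(0,1) (complex-valued) are represented by their continuous
 representative on [0,1], extended by 0 outside [0,1]. u is in H^1 iff
 u x = u 0 + integral of g over [0,x] for some square-integrable g (the weak derivative).\<close>

definition is_weak_deriv :: "(real \<Rightarrow> complex) \<Rightarrow> (real \<Rightarrow> complex) \<Rightarrow> bool" where
  "is_weak_deriv u g \<longleftrightarrow> g \<in> borel_measurable lborel \<and>
     set_integrable lborel {0..1::real} (\<lambda>t. (cmod (g t))\<^sup>2) \<and>
     (\<forall>x\<in>{0..1}. u x = u 0 + (LINT t:{0..x}|lborel. g t))"

definition H1 :: "(real \<Rightarrow> complex) set" where
  "H1 = {u. (\<forall>x. x \<notin> {0..1} \<longrightarrow> u x = 0) \<and>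
            set_integrable lborel {0..1::real} (\<lambda>t. (cmod (u t))\<^sup>2) \<and>
            (\<exists>g. is_weak_deriv u g)}"

definition h1deriv :: "(real \<Rightarrow> complex) \<Rightarrow> (real \<Rightarrow> complex)" where
  "h1deriv u = (SOME g. is_weak_deriv u g)"

definition H1norm :: "(real \<Rightarrow> complex) \<Rightarrow> real" where
  "H1norm u = sqrt ((LINT t:{0..1}|lborel. (cmod (u t))\<^sup>2)
                   + (LINT t:{0..1}|lborel. (cmod (h1deriv u t))\<^sup>2))"

definition H1theta :: "real \<Rightarrow> (real \<Rightarrow> complex) set" where
  "H1theta \<theta> = {u \<in> H1. u 1 = exp (2 * pi * \<i> * complex_of_real \<theta>) * u 0}"

definition Q1 :: "real \<Rightarrow> real \<Rightarrow> real set" where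
  "Q1 \<alpha> \<beta> = {0<..<\<alpha>} \<union> {\<beta><..<1}"

definition Vspace :: "(real \<Rightarrow> real) \<Rightarrow> real \<Rightarrow> real \<Rightarrow> real \<Rightarrow> (real \<Rightarrow> complex) set" where
  "Vspace p \<alpha> \<beta> \<theta> = {v \<in> H1theta \<theta>.
      AE t in lborel. t \<in> Q1 \<alpha> \<beta> \<longrightarrow> complex_of_real (p t) * h1deriv v t = 0}"

definition cscale :: "complex \<Rightarrow> (real \<Rightarrow> complex) \<Rightarrow> (real \<Rightarrow> complex)" where
  "cscale c f = (\<lambda>x. c * f x)"

definition lin_subspace :: "(real \<Rightarrow> complex) set \<Rightarrow> bool" where
  "lin_subspace F \<longleftrightarrow> module.subspace cscale F"

definition has_dim :: "(real \<Rightarrow> complex) set \<Rightarrow> nat \<Rightarrow> bool" where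
  "has_dim F k \<longleftrightarrow> (\<exists>B. finite B \<and> card B = k \<and> \<not> module.dependent cscale B
                        \<and> module.span cscale B = F)"

definition subsp_dist :: "(real \<Rightarrow> complex) set \<Rightarrow> (real \<Rightarrow> complex) set \<Rightarrow> real" where
  "subsp_dist N M = (if {u \<in> N. H1norm u = 1} = {} then 0
     else (SUP u\<in>{u \<in> N. H1norm u = 1}. INF v\<in>M. H1norm (u - v)))"

end

theory Submission
  imports Defs
begin

text \<open>A function in V(theta) has vanishing derivative on (0, alpha), so it is constant there and
  sqrt alpha * |v(0)| <= ||v||. Let phi be the ramp rising linearly from 0 to 1 on [alpha, beta].
  The map u |-> u + c u(0) phi is linear, fixes u(0), is inverted by the same map with -c, and for
  c = e^(2 pi i theta2) - e^(2 pi i theta1) it carries V(theta1) into V(theta2), because phi is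
  constant on Q1. It moves a unit vector of V by at most |c| ||phi|| / sqrt alpha, which tends to 0
  as theta2 tends to theta1; so the image of F1 is a k-dimensional subspace of V(theta2) that is
  close to F1 in both directions.\<close>

lemma square_integrable_imp_set_integrable:
  fixes g :: "real \<Rightarrow> complex"
  assumes m: "g \<in> borel_measurable lborel"
    and s: "set_integrable lborel {a..b} (\<lambda>t. (cmod (g t))\<^sup>2)"
  shows "set_integrable lborel {a..b} g"
  unfolding set_integrable_def
proof (rule Bochner_Integration.integrable_bound)
  have "integrable lborel (\<lambda>x. indicator {a..b} x *\<^sub>R (1::real))"
    by (simp add: emeasure_lborel_Icc_eq)
  then show "integrable lborel (\<lambda>x. indicator {a..b} x *\<^sub>R (1 + (cmod (g x))\<^sup>2))"
    using Bochner_Integration.integrable_add[OF _ s[unfolded set_integrable_def]]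
    by (simp add: algebra_simps scaleR_add_right)
  show "(\<lambda>x. indicat_real {a..b} x *\<^sub>R g x) \<in> borel_measurable lborel"
    using m by measurable
  have "cmod z \<le> 1 + (cmod z)\<^sup>2" for z :: complex
    using sum_power2_ge_zero[of "cmod z - 1/2" 0] by (simp add: power2_eq_square algebra_simps)
  then show "AE x in lborel. norm (indicat_real {a..b} x *\<^sub>R g x)
      \<le> norm (indicator {a..b} x *\<^sub>R (1 + (cmod (g x))\<^sup>2))"
    by (intro AE_I2) (auto simp: indicator_def)
qed

lemma set_integrable_bounded_Icc:
  fixes f :: "real \<Rightarrow> 'b::{banach, second_countable_topology}"
  assumes [measurable]: "f \<in> borel_measurable lborel"
    and bound: "\<And>t. t \<in> {a..b} \<Longrightarrow> norm (f t) \<le> C"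
  shows "set_integrable lborel {a..b} f"
proof (rule set_integrable_bound[where f = "\<lambda>_. C"])
  have "integrable lborel (indicat_real {a..b})"
    by (simp add: emeasure_lborel_Icc_eq)
  then show "set_integrable lborel {a..b} (\<lambda>_. C)"
    unfolding set_integrable_def real_scaleR_def by (rule integrable_mult_left)
  show "set_borel_measurable lborel {a..b} f"
    unfolding set_borel_measurable_def by measurable
  show "AE x in lborel. x \<in> {a..b} \<longrightarrow> norm (f x) \<le> norm C"
    using bound by (intro AE_I2) force
qed

lemma set_integral_indicator:
  fixes A B :: "real set"
  assumes "B \<in> sets borel"
  shows "(LINT t:A|lborel. indicator B t) = measure lborel (A \<inter> B)"
proof -
  have "(\<lambda>t. indicator A t *\<^sub>R indicator B t) = (indicator (A \<inter> B) :: real \<Rightarrow> real)"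
    by (auto simp: indicator_def fun_eq_iff)
  then show ?thesis
    unfolding set_lebesgue_integral_def by simp
qed

lemma set_integral_nonneg:
  fixes f :: "'a \<Rightarrow> real"
  assumes "\<And>t. 0 \<le> f t"
  shows "0 \<le> (LINT t:A|M. f t)"
  unfolding set_lebesgue_integral_def
  by (rule integral_nonneg_AE) (use assms in \<open>auto intro!: AE_I2 simp: indicator_def\<close>)

lemma set_integral_Re:
  "set_integrable M A h \<Longrightarrow> (LINT t:A|M. Re (h t)) = Re (LINT t:A|M. (h t::complex))"
  unfolding set_lebesgue_integral_def set_integrable_def
  by (subst integral_Re[symmetric]) (auto intro: Bochner_Integration.integral_cong)

lemma set_integral_Im:
  "set_integrable M A h \<Longrightarrow> (LINT t:A|M. Im (h t)) = Im (LINT t:A|M. (h t::complex))"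
  unfolding set_lebesgue_integral_def set_integrable_def
  by (subst integral_Im[symmetric]) (auto intro: Bochner_Integration.integral_cong)

lemma set_integrable_Re:
  "set_integrable M A (h :: _ \<Rightarrow> complex) \<Longrightarrow> set_integrable M A (\<lambda>t. Re (h t))"
  unfolding set_integrable_def by (drule integrable_Re) (simp add: mult.commute)

lemma set_integrable_Im:
  "set_integrable M A (h :: _ \<Rightarrow> complex) \<Longrightarrow> set_integrable M A (\<lambda>t. Im (h t))"
  unfolding set_integrable_def by (drule integrable_Im) (simp add: mult.commute)

lemma emeasure_density_indicator:
  fixes h :: "real \<Rightarrow> real"
  assumes [measurable]: "h \<in> borel_measurable lborel" "S \<in> sets borel" "A \<in> sets borel"
    and "set_integrable lborel (A \<inter> S) h" and "\<And>t. 0 \<le> h t"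
  shows "emeasure (density lborel (\<lambda>t. ennreal (indicator S t * h t))) A
    = ennreal (LINT t:(A \<inter> S)|lborel. h t)"
proof -
  have "emeasure (density lborel (\<lambda>t. ennreal (indicator S t * h t))) A
      = (\<integral>\<^sup>+ t. ennreal (indicator S t * h t) * indicator A t \<partial>lborel)"
    by (rule emeasure_density) auto
  also have "\<dots> = (\<integral>\<^sup>+ t. ennreal (indicator (A \<inter> S) t *\<^sub>R h t) \<partial>lborel)"
    by (rule nn_integral_cong) (auto simp: indicator_def)
  also have "\<dots> = ennreal (LINT t:(A \<inter> S)|lborel. h t)"
    unfolding set_lebesgue_integral_def
    by (rule nn_integral_eq_integral) (use assms in \<open>auto simp: set_integrable_def\<close>)
  finally show ?thesis .
qed

lemma set_integral_tail_eq_0: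
  fixes h :: "real \<Rightarrow> real"
  assumes hi: "set_integrable lborel {0..1} h"
    and zero: "\<forall>x\<in>{0..1}. (LINT t:{0..x}|lborel. h t) = 0"
  shows "(LINT t:({x<..} \<inter> {0..1})|lborel. h t) = 0"
proof (cases "0 \<le> x \<and> x < 1")
  case True
  have split: "{0..1} = {0..x} \<union> {x<..1::real}" and tail: "{x<..} \<inter> {0..1} = {x<..1::real}"
    using True by auto
  have "(LINT t:{0..1}|lborel. h t) = (LINT t:{0..x}|lborel. h t) + (LINT t:{x<..1}|lborel. h t)"
    unfolding split
    by (rule set_integral_Un) (use True in \<open>auto intro: set_integrable_subset[OF hi]\<close>)
  then show ?thesis
    using zero True tail by simp
next
  case False
  then have "{x<..} \<inter> {0..1} = {0..1::real} \<or> {x<..} \<inter> {0..1} = ({}::real set)"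
    by auto
  then show ?thesis
    using zero by (auto simp: set_lebesgue_integral_def)
qed

text \<open>Both the positive and the negative part of h define finite measures that agree on all
  rays {x<..}, hence coincide, so their densities agree almost everywhere.\<close>

lemma AE_zero_if_set_integrals_zero:
  fixes h :: "real \<Rightarrow> real"
  assumes [measurable]: "h \<in> borel_measurable lborel"
    and hi: "set_integrable lborel {0..1} h"
    and zero: "\<forall>x\<in>{0..1}. (LINT t:{0..x}|lborel. h t) = 0"
  shows "AE t in lborel. t \<in> {0..1} \<longrightarrow> h t = 0"
proof -
  define hp hn where "hp t = max 0 (h t)" and "hn t = max 0 (- h t)" for t
  have hp_hn_measurable [measurable]: "hp \<in> borel_measurable lborel" "hn \<in> borel_measurable lborel"
    unfolding hp_def hn_def by measurable
  have nonneg: "0 \<le> hp t" "0 \<le> hn t" for t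
    by (simp_all add: hp_def hn_def)
  have part_integrable: "set_integrable lborel ({x<..} \<inter> {0..1}) hp"
      "set_integrable lborel ({x<..} \<inter> {0..1}) hn" for x
    using set_integrable_subset[OF hi, of "{x<..} \<inter> {0..1}"]
    unfolding set_integrable_def hp_def hn_def
    by (auto elim!: Bochner_Integration.integrable_bound intro!: AE_I2 simp: indicator_def)
  have parts_eq: "(LINT t:({x<..} \<inter> {0..1})|lborel. hp t) = (LINT t:({x<..} \<inter> {0..1})|lborel. hn t)"
    for x
  proof -
    have "(LINT t:({x<..} \<inter> {0..1})|lborel. hp t - hn t) = (LINT t:({x<..} \<inter> {0..1})|lborel. h t)"
      by (rule set_lebesgue_integral_cong) (auto simp: hp_def hn_def)
    then show ?thesis
      using set_integral_diff(2)[OF part_integrable] set_integral_tail_eq_0[OF hi zero, of x]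
      by simp
  qed
  have "density lborel (\<lambda>t. ennreal (indicator {0..1} t * hp t))
      = density lborel (\<lambda>t. ennreal (indicator {0..1} t * hn t))"
    by (rule measure_eqI_lessThan)
      (simp_all add: emeasure_density_indicator part_integrable parts_eq nonneg hp_hn_measurable)
  then have "AE t in lborel. ennreal (indicator {0..1} t * hp t) = ennreal (indicator {0..1} t * hn t)"
    by (subst (asm) sigma_finite_measure.density_unique_iff[OF sigma_finite_lborel]) auto
  then show ?thesis
    by eventually_elim (auto simp: hp_def hn_def max_def split: if_splits)
qed

lemma AE_zero_if_set_integrals_zero_complex:
  fixes h :: "real \<Rightarrow> complex"
  assumes [measurable]: "h \<in> borel_measurable lborel"
    and hi: "set_integrable lborel {0..1} h"
    and zero: "\<forall>x\<in>{0..1}. (LINT t:{0..x}|lborel. h t) = 0"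
  shows "AE t in lborel. t \<in> {0..1} \<longrightarrow> h t = 0"
proof -
  have hx: "set_integrable lborel {0..x} h" if "x \<in> {0..1}" for x
    using that by (auto intro: set_integrable_subset[OF hi])
  have "AE t in lborel. t \<in> {0..1} \<longrightarrow> Re (h t) = 0"
    using zero hx set_integrable_Re[OF hi]
    by (intro AE_zero_if_set_integrals_zero) (auto simp: set_integral_Re)
  moreover have "AE t in lborel. t \<in> {0..1} \<longrightarrow> Im (h t) = 0"
    using zero hx set_integrable_Im[OF hi]
    by (intro AE_zero_if_set_integrals_zero) (auto simp: set_integral_Im)
  ultimately show ?thesis
    by eventually_elim (auto simp: complex_eq_iff)
qed

lemma is_weak_deriv_borel_measurable: "is_weak_deriv u g \<Longrightarrow> g \<in> borel_measurable lborel"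
  by (simp add: is_weak_deriv_def)

lemma is_weak_deriv_square_integrable:
  "is_weak_deriv u g \<Longrightarrow> set_integrable lborel {0..1} (\<lambda>t. (cmod (g t))\<^sup>2)"
  by (simp add: is_weak_deriv_def)

lemma is_weak_deriv_eq: "is_weak_deriv u g \<Longrightarrow> x \<in> {0..1} \<Longrightarrow> u x = u 0 + (LINT t:{0..x}|lborel. g t)"
  unfolding is_weak_deriv_def by blast

lemma is_weak_deriv_set_integrable:
  assumes "is_weak_deriv u g" and "{a..b} \<subseteq> {0..1}"
  shows "set_integrable lborel {a..b} g"
proof -
  have "set_integrable lborel {0..1} g"
    using assms(1)
    by (intro square_integrable_imp_set_integrable is_weak_deriv_borel_measurable
        is_weak_deriv_square_integrable)
  then show ?thesis
    by (rule set_integrable_subset) (use assms(2) in auto)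
qed

lemma is_weak_deriv_unique:
  assumes u1: "is_weak_deriv u g1" and u2: "is_weak_deriv u g2"
  shows "AE t in lborel. t \<in> {0..1} \<longrightarrow> g1 t = g2 t"
proof -
  have [measurable]: "g1 \<in> borel_measurable lborel" "g2 \<in> borel_measurable lborel"
    using u1 u2 by (auto dest: is_weak_deriv_borel_measurable)
  have "AE t in lborel. t \<in> {0..1} \<longrightarrow> g1 t - g2 t = 0"
  proof (rule AE_zero_if_set_integrals_zero_complex)
    show "set_integrable lborel {0..1} (\<lambda>t. g1 t - g2 t)"
      using is_weak_deriv_set_integrable[OF u1 order_refl] is_weak_deriv_set_integrable[OF u2 order_refl]
      by (rule set_integral_diff)
    show "\<forall>x\<in>{0..1}. (LINT t:{0..x}|lborel. g1 t - g2 t) = 0"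
    proof
      fix x :: real assume x: "x \<in> {0..1}"
      then have "{0..x} \<subseteq> {0..1}"
        by auto
      then have "(LINT t:{0..x}|lborel. g1 t - g2 t) = (LINT t:{0..x}|lborel. g1 t) - (LINT t:{0..x}|lborel. g2 t)"
        using is_weak_deriv_set_integrable[OF u1] is_weak_deriv_set_integrable[OF u2]
        by (intro set_integral_diff)
      also have "\<dots> = 0"
        using is_weak_deriv_eq[OF u1 x] is_weak_deriv_eq[OF u2 x] by simp
      finally show "(LINT t:{0..x}|lborel. g1 t - g2 t) = 0" .
    qed
  qed measurable
  then show ?thesis
    by eventually_elim auto
qed

lemma is_weak_deriv_h1deriv: "u \<in> H1 \<Longrightarrow> is_weak_deriv u (h1deriv u)"
  unfolding H1_def h1deriv_def by (auto intro: someI[where P = "is_weak_deriv u"])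

lemma H1norm_eq_weak_deriv:
  assumes "is_weak_deriv u g"
  shows "H1norm u = sqrt ((LINT t:{0..1}|lborel. (cmod (u t))\<^sup>2) + (LINT t:{0..1}|lborel. (cmod (g t))\<^sup>2))"
proof -
  have w: "is_weak_deriv u (h1deriv u)"
    unfolding h1deriv_def by (rule someI[where P = "is_weak_deriv u", OF assms])
  have [measurable]: "h1deriv u \<in> borel_measurable lborel" "g \<in> borel_measurable lborel"
    using w assms by (auto dest: is_weak_deriv_borel_measurable)
  have "(LINT t:{0..1}|lborel. (cmod (h1deriv u t))\<^sup>2) = (LINT t:{0..1}|lborel. (cmod (g t))\<^sup>2)"
    by (rule set_lebesgue_integral_cong_AE)
      (use is_weak_deriv_unique[OF w assms] in \<open>auto elim: AE_mp\<close>)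
  then show ?thesis
    unfolding H1norm_def by simp
qed

lemma H1norm_nonneg: "0 \<le> H1norm u"
  unfolding H1norm_def by (intro real_sqrt_ge_zero add_nonneg_nonneg set_integral_nonneg) simp_all

lemma is_weak_deriv_continuous_on:
  assumes "is_weak_deriv u g"
  shows "continuous_on {0..1} u"
proof -
  have "g integrable_on {0..1}"
    using is_weak_deriv_set_integrable[OF assms order_refl] by (rule set_borel_integral_eq_integral)
  then have "continuous_on {0..1} (\<lambda>x. u 0 + integral {0..x} g)"
    by (intro continuous_intros indefinite_integral_continuous_1)
  moreover have "u 0 + integral {0..x} g = u x" if "x \<in> {0..1}" for x
    using that is_weak_deriv_eq[OF assms that]
      set_borel_integral_eq_integral(2)[OF is_weak_deriv_set_integrable[OF assms, of 0 x]]
    by auto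
  ultimately show ?thesis
    by (rule continuous_on_eq)
qed

lemma H1_borel_measurable:
  assumes "u \<in> H1"
  shows "u \<in> borel_measurable lborel"
proof -
  have "(\<lambda>x. indicator {0..1::real} x *\<^sub>R u x) \<in> borel_measurable borel"
    using is_weak_deriv_continuous_on[OF is_weak_deriv_h1deriv[OF assms]]
    by (intro borel_measurable_continuous_on_indicator) auto
  moreover have "(\<lambda>x. indicator {0..1::real} x *\<^sub>R u x) = u"
    using assms by (auto simp: H1_def indicator_def fun_eq_iff)
  ultimately show ?thesis
    by simp
qed

lemma square_integrable_add:
  fixes f g :: "real \<Rightarrow> complex"
  assumes [measurable]: "f \<in> borel_measurable lborel" "g \<in> borel_measurable lborel"
    and "set_integrable lborel {a..b} (\<lambda>t. (cmod (f t))\<^sup>2)"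
    and "set_integrable lborel {a..b} (\<lambda>t. (cmod (g t))\<^sup>2)"
  shows "set_integrable lborel {a..b} (\<lambda>t. (cmod (f t + g t))\<^sup>2)"
proof (rule set_integrable_bound[where f = "\<lambda>t. 2 * (cmod (f t))\<^sup>2 + 2 * (cmod (g t))\<^sup>2"])
  show "set_integrable lborel {a..b} (\<lambda>t. 2 * (cmod (f t))\<^sup>2 + 2 * (cmod (g t))\<^sup>2)"
    using assms(3,4) by auto
  show "set_borel_measurable lborel {a..b} (\<lambda>t. (cmod (f t + g t))\<^sup>2)"
    unfolding set_borel_measurable_def by measurable
  have "(cmod (x + y))\<^sup>2 \<le> 2 * (cmod x)\<^sup>2 + 2 * (cmod y)\<^sup>2" for x y :: complex
  proof -
    have "(cmod (x + y))\<^sup>2 \<le> (cmod x + cmod y)\<^sup>2"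
      by (simp add: norm_triangle_ineq power_mono)
    also have "\<dots> \<le> 2 * (cmod x)\<^sup>2 + 2 * (cmod y)\<^sup>2"
      using sum_power2_ge_zero[of "cmod x - cmod y" 0] by (simp add: power2_eq_square algebra_simps)
    finally show ?thesis .
  qed
  then show "AE x in lborel. x \<in> {a..b} \<longrightarrow> norm ((cmod (f x + g x))\<^sup>2)
      \<le> norm (2 * (cmod (f x))\<^sup>2 + 2 * (cmod (g x))\<^sup>2)"
    by (intro AE_I2) simp
qed

lemma square_integrable_scale:
  fixes f :: "real \<Rightarrow> complex"
  assumes "set_integrable lborel A (\<lambda>t. (cmod (f t))\<^sup>2)"
  shows "set_integrable lborel A (\<lambda>t. (cmod (d * f t))\<^sup>2)"
  using assms by (simp add: norm_mult power_mult_distrib)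

lemma is_weak_deriv_add:
  assumes u: "is_weak_deriv u g" and v: "is_weak_deriv v h"
  shows "is_weak_deriv (\<lambda>x. u x + v x) (\<lambda>t. g t + h t)"
  unfolding is_weak_deriv_def
proof (intro conjI ballI)
  have [measurable]: "g \<in> borel_measurable lborel" "h \<in> borel_measurable lborel"
    using u v by (auto dest: is_weak_deriv_borel_measurable)
  show "(\<lambda>t. g t + h t) \<in> borel_measurable lborel"
    by measurable
  show "set_integrable lborel {0..1} (\<lambda>t. (cmod (g t + h t))\<^sup>2)"
    using u v by (intro square_integrable_add is_weak_deriv_square_integrable) measurable
  fix x :: real assume x: "x \<in> {0..1}"
  have "(LINT t:{0..x}|lborel. g t + h t) = (LINT t:{0..x}|lborel. g t) + (LINT t:{0..x}|lborel. h t)"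
    using x is_weak_deriv_set_integrable[OF u, of 0 x] is_weak_deriv_set_integrable[OF v, of 0 x]
    by auto
  then show "u x + v x = u 0 + v 0 + (LINT t:{0..x}|lborel. g t + h t)"
    using is_weak_deriv_eq[OF u x] is_weak_deriv_eq[OF v x] by simp
qed

lemma is_weak_deriv_scale:
  assumes v: "is_weak_deriv v h"
  shows "is_weak_deriv (\<lambda>x. d * v x) (\<lambda>t. d * h t)"
  unfolding is_weak_deriv_def
proof (intro conjI ballI)
  have [measurable]: "h \<in> borel_measurable lborel"
    using v by (rule is_weak_deriv_borel_measurable)
  show "(\<lambda>t. d * h t) \<in> borel_measurable lborel"
    by measurable
  show "set_integrable lborel {0..1} (\<lambda>t. (cmod (d * h t))\<^sup>2)"
    using v by (intro square_integrable_scale is_weak_deriv_square_integrable)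
  show "d * v x = d * v 0 + (LINT t:{0..x}|lborel. d * h t)" if "x \<in> {0..1}" for x
    using is_weak_deriv_eq[OF v that] by (simp add: algebra_simps)
qed

lemma H1_add:
  assumes u: "u \<in> H1" and v: "v \<in> H1"
  shows "(\<lambda>x. u x + v x) \<in> H1"
proof -
  have "set_integrable lborel {0..1} (\<lambda>t. (cmod (u t + v t))\<^sup>2)"
    using u v by (intro square_integrable_add H1_borel_measurable) (auto simp: H1_def)
  moreover have "is_weak_deriv (\<lambda>x. u x + v x) (\<lambda>t. h1deriv u t + h1deriv v t)"
    using u v by (intro is_weak_deriv_add is_weak_deriv_h1deriv)
  ultimately show ?thesis
    using u v unfolding H1_def by auto
qed

lemma H1_scale:
  assumes v: "v \<in> H1"
  shows "(\<lambda>x. d * v x) \<in> H1"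
proof -
  have "set_integrable lborel {0..1} (\<lambda>t. (cmod (d * v t))\<^sup>2)"
    using v by (intro square_integrable_scale) (auto simp: H1_def)
  moreover have "is_weak_deriv (\<lambda>x. d * v x) (\<lambda>t. d * h1deriv v t)"
    using v by (intro is_weak_deriv_scale is_weak_deriv_h1deriv)
  ultimately show ?thesis
    using v unfolding H1_def by auto
qed

definition ramp :: "real \<Rightarrow> real \<Rightarrow> real \<Rightarrow> complex" where
  "ramp a b x = (if x \<in> {0..1} then complex_of_real (max 0 (min x b - a) / (b - a)) else 0)"

definition ramp_deriv :: "real \<Rightarrow> real \<Rightarrow> real \<Rightarrow> complex" where
  "ramp_deriv a b t = complex_of_real (indicator {a..b} t / (b - a))"

lemma ramp_borel_measurable [measurable]: "ramp a b \<in> borel_measurable lborel"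
  unfolding ramp_def by measurable

lemma ramp_deriv_borel_measurable [measurable]: "ramp_deriv a b \<in> borel_measurable lborel"
  unfolding ramp_deriv_def by measurable

lemma ramp_0: "0 < a \<Longrightarrow> a < b \<Longrightarrow> ramp a b 0 = 0"
  by (simp add: ramp_def)

lemma ramp_1: "a < b \<Longrightarrow> b < 1 \<Longrightarrow> ramp a b 1 = 1"
  by (simp add: ramp_def)

lemma norm_ramp_le: "a < b \<Longrightarrow> cmod (ramp a b x) \<le> 1"
  by (auto simp: ramp_def divide_le_eq simp del: of_real_divide)

lemma norm_ramp_deriv_le: "a < b \<Longrightarrow> cmod (ramp_deriv a b t) \<le> 1 / (b - a)"
  unfolding ramp_deriv_def norm_of_real by (auto simp: indicator_def)

lemma ramp_deriv_eq_0: "t \<notin> {a..b} \<Longrightarrow> ramp_deriv a b t = 0"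
  by (simp add: ramp_deriv_def)

lemma is_weak_deriv_ramp:
  assumes ab: "0 < a" "a < b" "b < 1"
  shows "is_weak_deriv (ramp a b) (ramp_deriv a b)"
  unfolding is_weak_deriv_def
proof (intro conjI ballI)
  show "ramp_deriv a b \<in> borel_measurable lborel"
    by measurable
  show "set_integrable lborel {0..1} (\<lambda>t. (cmod (ramp_deriv a b t))\<^sup>2)"
    using norm_ramp_deriv_le[OF ab(2)]
    by (intro set_integrable_bounded_Icc[where C = "(1 / (b - a))\<^sup>2"]) (auto intro: power_mono)
  fix x :: real assume x: "x \<in> {0..1}"
  have "measure lborel ({0..x} \<inter> {a..b}) = max 0 (min x b - a)"
  proof (cases "x < a")
    case True
    then have "{0..x} \<inter> {a..b} = {}" by auto
    then show ?thesis using True by simp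
  next
    case False
    then have "{0..x} \<inter> {a..b} = {a..min x b}" using ab by auto
    then show ?thesis using False ab by simp
  qed
  then have "(LINT t:{0..x}|lborel. ramp_deriv a b t) = of_real (max 0 (min x b - a) / (b - a))"
    unfolding ramp_deriv_def set_integral_complex_of_real by (simp add: set_integral_indicator)
  then show "ramp a b x = ramp a b 0 + (LINT t:{0..x}|lborel. ramp_deriv a b t)"
    using x ab by (simp add: ramp_def)
qed

lemma ramp_in_H1:
  assumes ab: "0 < a" "a < b" "b < 1"
  shows "ramp a b \<in> H1"
  unfolding H1_def
proof (intro CollectI conjI allI impI)
  show "ramp a b x = 0" if "x \<notin> {0..1}" for x
    using that unfolding ramp_def by (auto simp del: of_real_divide)
  show "set_integrable lborel {0..1} (\<lambda>t. (cmod (ramp a b t))\<^sup>2)"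
    using norm_ramp_le[OF ab(2)] by (intro set_integrable_bounded_Icc[where C = 1]) (auto simp: abs_square_le_1)
  show "\<exists>g. is_weak_deriv (ramp a b) g"
    using is_weak_deriv_ramp[OF ab] by blast
qed

lemma set_integral_const_01: "(LINT (t::real):{0..1}|lborel. (c::real)) = c"
  using set_integral_const[of "{0..1::real}" lborel c] by (simp add: emeasure_lborel_Icc_eq)

lemma H1norm_scaled_ramp_le:
  assumes ab: "0 < a" "a < b" "b < 1"
  shows "H1norm (\<lambda>x. d * ramp a b x) \<le> cmod d * sqrt (1 + 1 / (b - a)\<^sup>2)"
proof -
  have w: "is_weak_deriv (\<lambda>x. d * ramp a b x) (\<lambda>t. d * ramp_deriv a b t)"
    by (rule is_weak_deriv_scale[OF is_weak_deriv_ramp[OF ab]])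
  have "(LINT t:{0..1}|lborel. (cmod (d * ramp a b t))\<^sup>2) \<le> (LINT (t::real):{0..1}|lborel. (cmod d)\<^sup>2)"
  proof (rule set_integral_mono)
    show "set_integrable lborel {0..1} (\<lambda>t. (cmod (d * ramp a b t))\<^sup>2)"
      using ramp_in_H1[OF ab] by (intro square_integrable_scale) (simp add: H1_def)
    show "(cmod (d * ramp a b t))\<^sup>2 \<le> (cmod d)\<^sup>2" for t
      using norm_ramp_le[OF ab(2), of t]
      by (simp add: norm_mult power_mono mult_left_le)
  qed (rule set_integrable_bounded_Icc[where C = "(cmod d)\<^sup>2"]; simp)
  moreover have "(LINT t:{0..1}|lborel. (cmod (d * ramp_deriv a b t))\<^sup>2)
      \<le> (LINT (t::real):{0..1}|lborel. (cmod d * (1 / (b - a)))\<^sup>2)"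
  proof (rule set_integral_mono)
    show "set_integrable lborel {0..1} (\<lambda>t. (cmod (d * ramp_deriv a b t))\<^sup>2)"
      by (rule is_weak_deriv_square_integrable[OF w])
    show "(cmod (d * ramp_deriv a b t))\<^sup>2 \<le> (cmod d * (1 / (b - a)))\<^sup>2" for t
      using norm_ramp_deriv_le[OF ab(2), of t] unfolding norm_mult
      by (intro power_mono mult_left_mono) auto
  qed (rule set_integrable_bounded_Icc[where C = "(cmod d * (1 / (b - a)))\<^sup>2"]; simp)
  ultimately have "H1norm (\<lambda>x. d * ramp a b x) \<le> sqrt ((cmod d)\<^sup>2 + (cmod d * (1 / (b - a)))\<^sup>2)"
    unfolding H1norm_eq_weak_deriv[OF w] set_integral_const_01 by simp
  also have "(cmod d)\<^sup>2 + (cmod d * (1 / (b - a)))\<^sup>2 = (cmod d)\<^sup>2 * (1 + 1 / (b - a)\<^sup>2)"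
    by (simp add: power_mult_distrib algebra_simps power_divide)
  also have "sqrt \<dots> = cmod d * sqrt (1 + 1 / (b - a)\<^sup>2)"
    by (simp add: real_sqrt_mult)
  finally show ?thesis .
qed

text \<open>Only the positivity of p matters: on Q1 the constraint p v' = 0 just says v' = 0.\<close>

lemma Vspace_deriv_AE_zero:
  assumes "\<forall>x. p x > 0" and "v \<in> Vspace p \<alpha> \<beta> \<theta>"
  shows "AE t in lborel. t \<in> Q1 \<alpha> \<beta> \<longrightarrow> h1deriv v t = 0"
proof -
  have "AE t in lborel. t \<in> Q1 \<alpha> \<beta> \<longrightarrow> complex_of_real (p t) * h1deriv v t = 0"
    using assms(2) by (simp add: Vspace_def)
  then show ?thesis
    by eventually_elim (metis assms(1) less_irrefl mult_eq_0_iff of_real_eq_0_iff)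
qed

lemma Vspace_in_H1: "v \<in> Vspace p \<alpha> \<beta> \<theta> \<Longrightarrow> v \<in> H1"
  by (simp add: Vspace_def H1theta_def)

lemma Vspace_const_on_initial:
  assumes p: "\<forall>x. p x > 0" and v: "v \<in> Vspace p \<alpha> \<beta> \<theta>"
    and \<alpha>: "\<alpha> \<le> 1" and x: "x \<in> {0..\<alpha>}"
  shows "v x = v 0"
proof -
  have [measurable]: "h1deriv v \<in> borel_measurable lborel"
    by (rule is_weak_deriv_borel_measurable[OF is_weak_deriv_h1deriv[OF Vspace_in_H1[OF v]]])
  have "AE t in lborel. t \<in> {0..x} \<longrightarrow> h1deriv v t = 0"
    using Vspace_deriv_AE_zero[OF p v] AE_lborel_singleton[of 0] AE_lborel_singleton[of x]
    by eventually_elim (use x in \<open>auto simp: Q1_def\<close>)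
  then have "(LINT t:{0..x}|lborel. h1deriv v t) = (LINT t:{0..x}|lborel. 0)"
    by (intro set_lebesgue_integral_cong_AE) auto
  then show ?thesis
    using is_weak_deriv_eq[OF is_weak_deriv_h1deriv[OF Vspace_in_H1[OF v]], of x] x \<alpha>
    by (simp add: set_lebesgue_integral_def)
qed

lemma Vspace_norm_at_0_le:
  assumes p: "\<forall>x. p x > 0" and v: "v \<in> Vspace p \<alpha> \<beta> \<theta>" and \<alpha>: "0 < \<alpha>" "\<alpha> \<le> 1"
  shows "sqrt \<alpha> * cmod (v 0) \<le> H1norm v"
proof -
  have vH: "v \<in> H1"
    by (rule Vspace_in_H1[OF v])
  have "\<alpha> * (cmod (v 0))\<^sup>2 = (LINT t:{0..1}|lborel. indicator {0..\<alpha>} t * (cmod (v 0))\<^sup>2)"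
    using \<alpha> by (simp add: set_integral_indicator Int_absorb1)
  also have "\<dots> \<le> (LINT t:{0..1}|lborel. (cmod (v t))\<^sup>2)"
  proof (rule set_integral_mono)
    show "set_integrable lborel {0..1} (\<lambda>t. indicator {0..\<alpha>} t * (cmod (v 0))\<^sup>2)"
      by (rule set_integrable_bounded_Icc[where C = "(cmod (v 0))\<^sup>2"]) (auto simp: indicator_def)
    show "set_integrable lborel {0..1} (\<lambda>t. (cmod (v t))\<^sup>2)"
      using vH by (simp add: H1_def)
    show "indicator {0..\<alpha>} t * (cmod (v 0))\<^sup>2 \<le> (cmod (v t))\<^sup>2" for t
      using Vspace_const_on_initial[OF p v \<alpha>(2), of t] by (auto simp: indicator_def)
  qed
  also have "\<dots> \<le> (H1norm v)\<^sup>2"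
    unfolding H1norm_def
    using set_integral_nonneg[of "\<lambda>t. (cmod (v t))\<^sup>2"] set_integral_nonneg[of "\<lambda>t. (cmod (h1deriv v t))\<^sup>2"]
    by simp
  finally have "sqrt (\<alpha> * (cmod (v 0))\<^sup>2) \<le> H1norm v"
    using H1norm_nonneg real_le_lsqrt by (simp add: real_sqrt_le_iff)
  then show ?thesis
    by (simp add: real_sqrt_mult)
qed

definition phase :: "real \<Rightarrow> complex" where
  "phase \<theta> = exp (2 * pi * \<i> * complex_of_real \<theta>)"

lemma phase_close:
  assumes "0 < \<eta>"
  shows "\<exists>\<delta>>0. \<forall>\<theta>. \<bar>\<theta> - \<theta>1\<bar> \<le> \<delta> \<longrightarrow> cmod (phase \<theta> - phase \<theta>1) < \<eta>"
proof -
  have "isCont phase \<theta>1"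
    unfolding phase_def by (intro continuous_intros)
  then obtain d where "d > 0" and d: "\<And>\<theta>. dist \<theta> \<theta>1 < d \<Longrightarrow> dist (phase \<theta>) (phase \<theta>1) < \<eta>"
    using continuous_at_eps_delta assms by blast
  then show ?thesis
    by (intro exI[of _ "d / 2"]) (auto simp: dist_norm)
qed

definition transfer :: "real \<Rightarrow> real \<Rightarrow> complex \<Rightarrow> (real \<Rightarrow> complex) \<Rightarrow> (real \<Rightarrow> complex)" where
  "transfer a b c u = (\<lambda>x. u x + c * u 0 * ramp a b x)"

lemma transfer_inverse: "0 < a \<Longrightarrow> a < b \<Longrightarrow> transfer a b (- c) (transfer a b c u) = u"
  by (simp add: transfer_def ramp_0 fun_eq_iff)

lemma inj_transfer: "0 < a \<Longrightarrow> a < b \<Longrightarrow> inj (transfer a b c)"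
  by (rule inj_on_inverseI[where g = "transfer a b (- c)"]) (rule transfer_inverse)

lemma module_cscale: "module cscale"
  by unfold_locales (auto simp: cscale_def fun_eq_iff algebra_simps)

lemma transfer_module_hom: "module_hom cscale cscale (transfer a b c)"
  unfolding module_hom_iff using module_cscale
  by (auto simp: transfer_def cscale_def fun_eq_iff algebra_simps)

lemma transfer_in_Vspace:
  assumes p: "\<forall>x. p x > 0" and ab: "0 < \<alpha>" "\<alpha> < \<beta>" "\<beta> < 1"
    and u: "u \<in> Vspace p \<alpha> \<beta> \<theta>1"
  shows "transfer \<alpha> \<beta> (phase \<theta>2 - phase \<theta>1) u \<in> Vspace p \<alpha> \<beta> \<theta>2"
proof -
  define c where "c = phase \<theta>2 - phase \<theta>1"
  define w where "w = transfer \<alpha> \<beta> c u"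
  have uH: "u \<in> H1"
    by (rule Vspace_in_H1[OF u])
  have wH: "w \<in> H1"
    unfolding w_def transfer_def by (intro H1_add H1_scale uH ramp_in_H1 ab)
  have "u 1 = phase \<theta>1 * u 0"
    using u by (simp add: Vspace_def H1theta_def phase_def)
  then have w1: "w 1 = exp (2 * pi * \<i> * complex_of_real \<theta>2) * w 0"
    using ab by (simp add: w_def transfer_def ramp_0 ramp_1 c_def phase_def algebra_simps)
  have "is_weak_deriv w (\<lambda>t. h1deriv u t + c * u 0 * ramp_deriv \<alpha> \<beta> t)"
    unfolding w_def transfer_def
    by (intro is_weak_deriv_add is_weak_deriv_scale is_weak_deriv_h1deriv uH is_weak_deriv_ramp ab)
  then have "AE t in lborel. t \<in> {0..1} \<longrightarrow> h1deriv w t = h1deriv u t + c * u 0 * ramp_deriv \<alpha> \<beta> t"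
    by (rule is_weak_deriv_unique[OF is_weak_deriv_h1deriv[OF wH]])
  then have "AE t in lborel. t \<in> Q1 \<alpha> \<beta> \<longrightarrow> complex_of_real (p t) * h1deriv w t = 0"
    using Vspace_deriv_AE_zero[OF p u]
    by eventually_elim (use ab in \<open>auto simp: Q1_def ramp_deriv_eq_0\<close>)
  then show ?thesis
    using wH w1 unfolding Vspace_def H1theta_def w_def c_def by simp
qed

lemma H1norm_sub_transfer_le:
  assumes p: "\<forall>x. p x > 0" and ab: "0 < \<alpha>" "\<alpha> < \<beta>" "\<beta> < 1"
    and u: "u \<in> Vspace p \<alpha> \<beta> \<theta>"
  shows "H1norm (u - transfer \<alpha> \<beta> c u) \<le> cmod c * (sqrt (1 + 1 / (\<beta> - \<alpha>)\<^sup>2) / sqrt \<alpha>) * H1norm u"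
proof -
  define K where "K = sqrt (1 + 1 / (\<beta> - \<alpha>)\<^sup>2)"
  have "u - transfer \<alpha> \<beta> c u = (\<lambda>x. - (c * u 0) * ramp \<alpha> \<beta> x)"
    by (simp add: transfer_def fun_eq_iff)
  then have "H1norm (u - transfer \<alpha> \<beta> c u) \<le> cmod c * K * cmod (u 0)"
    using H1norm_scaled_ramp_le[OF ab, of "- (c * u 0)"] by (simp add: K_def norm_mult mult_ac)
  also have "cmod (u 0) \<le> H1norm u / sqrt \<alpha>"
    using Vspace_norm_at_0_le[OF p u ab(1)] ab by (simp add: field_simps)
  then have "cmod c * K * cmod (u 0) \<le> cmod c * K * (H1norm u / sqrt \<alpha>)"
    by (rule mult_left_mono) (simp add: K_def)
  finally show ?thesis
    by (simp add: K_def)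
qed

lemma lin_subspace_image:
  "module_hom cscale cscale f \<Longrightarrow> lin_subspace F \<Longrightarrow> lin_subspace (f ` F)"
  unfolding lin_subspace_def by (rule module_hom.subspace_image)

lemma has_dim_image:
  assumes hom: "module_hom cscale cscale f" and "inj f" and "has_dim F k"
  shows "has_dim (f ` F) k"
proof -
  obtain B where B: "finite B" "card B = k" "\<not> module.dependent cscale B" "module.span cscale B = F"
    using assms(3) unfolding has_dim_def by blast
  have "\<not> module.dependent cscale (f ` B)"
    using \<open>inj f\<close> by (intro module_hom.independent_injective_image[OF hom B(3)]) (simp add: inj_on_def)
  moreover have "module.span cscale (f ` B) = f ` F"
    using module_hom.span_image[OF hom, of B] B(4) by simp
  ultimately show ?thesis
    unfolding has_dim_def using B \<open>inj f\<close> by (intro exI[of _ "f ` B"]) (simp add: card_image inj_on_subset)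
qed

lemma subsp_dist_le:
  assumes "0 \<le> r" and close: "\<And>u. u \<in> N \<Longrightarrow> H1norm u = 1 \<Longrightarrow> \<exists>v\<in>M. H1norm (u - v) \<le> r"
  shows "subsp_dist N M \<le> r"
proof (cases "{u \<in> N. H1norm u = 1} = {}")
  case False
  have "(SUP u\<in>{u \<in> N. H1norm u = 1}. INF v\<in>M. H1norm (u - v)) \<le> r"
  proof (rule cSUP_least[OF False])
    fix u assume "u \<in> {u \<in> N. H1norm u = 1}"
    then obtain v where "v \<in> M" and "H1norm (u - v) \<le> r"
      using close by blast
    moreover have "bdd_below ((\<lambda>v. H1norm (u - v)) ` M)"
      by (rule bdd_belowI[where m = 0]) (auto simp: H1norm_nonneg)
    ultimately show "(INF v\<in>M. H1norm (u - v)) \<le> r"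
      by (meson cINF_lower order_trans)
  qed
  then show ?thesis
    using False \<open>0 \<le> r\<close> by (simp add: subsp_dist_def)
qed (use \<open>0 \<le> r\<close> in \<open>simp add: subsp_dist_def\<close>)

lemma subsp_dist_transfer_image_le:
  assumes p: "\<forall>x. p x > 0" and ab: "0 < \<alpha>" "\<alpha> < \<beta>" "\<beta> < 1"
    and F: "F \<subseteq> Vspace p \<alpha> \<beta> \<theta>"
  shows "subsp_dist F (transfer \<alpha> \<beta> c ` F) \<le> cmod c * (sqrt (1 + 1 / (\<beta> - \<alpha>)\<^sup>2) / sqrt \<alpha>)"
proof (rule subsp_dist_le)
  show "0 \<le> cmod c * (sqrt (1 + 1 / (\<beta> - \<alpha>)\<^sup>2) / sqrt \<alpha>)"
    using ab by (intro mult_nonneg_nonneg divide_nonneg_nonneg) simp_all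
  fix u assume "u \<in> F" and "H1norm u = 1"
  then show "\<exists>v\<in>transfer \<alpha> \<beta> c ` F. H1norm (u - v) \<le> cmod c * (sqrt (1 + 1 / (\<beta> - \<alpha>)\<^sup>2) / sqrt \<alpha>)"
    using H1norm_sub_transfer_le[OF p ab, of u \<theta> c] F by force
qed

theorem proposition5p1:
  fixes p :: "real \<Rightarrow> real" and \<alpha> \<beta> \<theta>1 \<epsilon> :: real and k :: nat
    and F1 :: "(real \<Rightarrow> complex) set"
  assumes p_periodic: "\<forall>x. p (x + 1) = p x"
    and p_meas: "p \<in> borel_measurable lborel"
    and p_pos: "\<forall>x. p x > 0"
    and p_Linf: "\<exists>C. AE x in lborel. x \<in> {0..1} \<longrightarrow> \<bar>p x\<bar> \<le> C"
    and p_inv_Linf: "\<exists>C. AE x in lborel. x \<in> {0..1} \<longrightarrow> \<bar>1 / p x\<bar> \<le> C"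
    and "0 < \<alpha>" and "\<alpha> < \<beta>" and "\<beta> < 1"
    and "\<theta>1 \<in> {0..<1}"
    and "lin_subspace F1" and "F1 \<subseteq> Vspace p \<alpha> \<beta> \<theta>1" and "has_dim F1 k"
    and "\<epsilon> > 0"
  shows "\<exists>\<delta>>0. \<forall>\<theta>2\<in>{0..<1}. \<bar>\<theta>2 - \<theta>1\<bar> \<le> \<delta> \<longrightarrow>
           (\<exists>F2. lin_subspace F2 \<and> F2 \<subseteq> Vspace p \<alpha> \<beta> \<theta>2 \<and> has_dim F2 k \<and>
                 max (subsp_dist F1 F2) (subsp_dist F2 F1) < \<epsilon>)"
proof -
  note ab = \<open>0 < \<alpha>\<close> \<open>\<alpha> < \<beta>\<close> \<open>\<beta> < 1\<close>
  define K where "K = sqrt (1 + 1 / (\<beta> - \<alpha>)\<^sup>2) / sqrt \<alpha>"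
  have "K > 0"
    using ab by (simp add: K_def add_pos_nonneg)
  then obtain \<delta> where "\<delta> > 0" and small: "\<And>\<theta>. \<bar>\<theta> - \<theta>1\<bar> \<le> \<delta> \<Longrightarrow> cmod (phase \<theta> - phase \<theta>1) * K < \<epsilon>"
    using phase_close[of "\<epsilon> / K" \<theta>1] \<open>\<epsilon> > 0\<close> by (auto simp: pos_less_divide_eq)
  have "\<exists>F2. lin_subspace F2 \<and> F2 \<subseteq> Vspace p \<alpha> \<beta> \<theta>2 \<and> has_dim F2 k \<and>
          max (subsp_dist F1 F2) (subsp_dist F2 F1) < \<epsilon>" if "\<bar>\<theta>2 - \<theta>1\<bar> \<le> \<delta>" for \<theta>2
  proof -
    define c where "c = phase \<theta>2 - phase \<theta>1"
    define F2 where "F2 = transfer \<alpha> \<beta> c ` F1"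
    have F2: "F2 \<subseteq> Vspace p \<alpha> \<beta> \<theta>2"
      using transfer_in_Vspace[OF p_pos ab] \<open>F1 \<subseteq> Vspace p \<alpha> \<beta> \<theta>1\<close> by (auto simp: F2_def c_def)
    have "F1 = transfer \<alpha> \<beta> (- c) ` F2"
      using ab by (simp add: F2_def image_image transfer_inverse)
    then have "subsp_dist F2 F1 \<le> cmod c * K"
      using subsp_dist_transfer_image_le[OF p_pos ab F2, of "- c"] by (simp add: K_def)
    moreover have "subsp_dist F1 F2 \<le> cmod c * K"
      using subsp_dist_transfer_image_le[OF p_pos ab \<open>F1 \<subseteq> _\<close>] by (simp add: F2_def K_def)
    ultimately show ?thesis
      using small[OF that] F2 ab \<open>lin_subspace F1\<close> \<open>has_dim F1 k\<close>
      by (intro exI[of _ F2])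
        (auto simp: F2_def c_def transfer_module_hom inj_transfer lin_subspace_image has_dim_image)
  qed
  then show ?thesis
    using \<open>\<delta> > 0\<close> by blast
qed

end
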